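(* For every $\sigma\in\mathcal A$, every $\mathbf P_{\!\sigma}=(\mathbf p_{\sigma_d},\dots,\mathbf p_{\sigma_1})\in\mathcal P^\sigma$ and every $1\le n\le d-1$, the quantity $t_\sigma(\mathbf p_{\sigma_d};\dots;\mathbf p_{\sigma_{n+1}};\mathbf p^\ast_{\sigma_n};\dots;\mathbf p^\ast_{\sigma_1})$ equals $$T_n^\sigma+\sum_{k=n+1}^dC_k^{(d),\sigma}(\mathbf P_{\!\sigma})\Big(H(\mathbf p_{\sigma_k})+\int\varphi_k^\sigma\,\mathrm d\mathbf p_{\sigma_k}-\sum_{\ell=1}^n\chi_\ell^\sigma(\mathbf p_{\sigma_k})(T_\ell^\sigma-T_{\ell-1}^\sigma)\Big),$$ and moreover $t_\sigma(\mathbf p^\ast_{\sigma_d};\dots;\mathbf p^\ast_{\sigma_1})=T_d^\sigma$.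
   Context: Setup: $d\ge1$, $\mathcal I=\{1,\dots,N\}$, affine maps with diagonal linear parts $\mathrm{diag}(a_i^{(1)},\dots,a_i^{(d)})$, $\lambda_i^{(n)}=|a_i^{(n)}|\in(0,1)$, no two distinct maps agree on $[0,1]^d$. For a permutation $\sigma$, $\Pi_n^\sigma$ is orthogonal projection onto the span of coordinate axes $\sigma_1,\dots,\sigma_n$; $f_i,f_j$ overlap exactly if $\Pi_n^\sigma f_i=\Pi_n^\sigma f_j$ on $[0,1]^d$; $\mathcal I_n^\sigma$ = smallest elements of the classes of this equivalence relation. $\mathcal A$ = set of permutations $\sigma$ for which some $\mathbf i\in\mathcal I^{\mathbb N}$, $\delta>0$ have $L_\delta(\mathbf i,\sigma_d)\le\dots\le L_\delta(\mathbf i,\sigma_1)$ (ties broken by $\sigma_n>\sigma_{n-1}$), $L_\delta(\mathbf i,n)$ the unique integer with $\prod_{\ell\le L_\delta(\mathbf i,n)}\lambda_{i_\ell}^{(n)}\le\delta<\prod_{\ell\le L_\delta(\mathbf i,n)-1}\lambda_{i_\ell}^{(n)}$. $\mathcal P_n^\sigma$ = probability vectors on $\mathcal I_n^\sigma$; $\mathcal P^\sigma=\mathcal P_d^\sigma\times\dots\times\mathcal P_1^\sigma$. $\chi_n^\sigma(\mathbf p_{\sigma_m})=-\sum_{i\in\mathcal I_m^\sigma}p_{\sigma_m}(i)\log\lambda_i^{(\sigma_n)}$ ($n\le m$); $C_d^{(d),\sigma}=1/\chi_d^\sigma(\mathbf p_{\sigma_d})$, $C_n^{(d),\sigma}=(1-\sum_{m>n}C_m^{(d),\sigma}\chi_n^\sigma(\mathbf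 p_{\sigma_m}))/\chi_n^\sigma(\mathbf p_{\sigma_n})$ (note $C_k^{(d),\sigma}(\mathbf P_{\!\sigma})$ depends only on $\mathbf p_{\sigma_m}$, $m\ge k$). Potentials $\varphi_n^\sigma:\mathcal I_n^\sigma\to\mathbb R$, $\int\varphi_n^\sigma\mathrm d\mathbf p=\sum_ip(i)\varphi_n^\sigma(i)$; $t_\sigma(\mathbf P_{\!\sigma})=\sum_{n=1}^dC_n^{(d),\sigma}(\mathbf P_{\!\sigma})(H(\mathbf p_{\sigma_n})+\int\varphi_n^\sigma\mathrm d\mathbf p_{\sigma_n})$, $H$ Shannon entropy. $T_0^\sigma=0$; $T_n^\sigma$ is the unique solution of $\sum_{i\in\mathcal I_n^\sigma}p^\ast_{\sigma_n}(i)=1$ with $p^\ast_{\sigma_n}(i)=e^{\varphi_n^\sigma(i)}\prod_{\ell=1}^n(\lambda_i^{(\sigma_\ell)})^{T_\ell^\sigma-T_{\ell-1}^\sigma}$, $\mathbf p^\ast_{\sigma_n}=(p^\ast_{\sigma_n}(i))_i$. *)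

theory Defs
  imports Complex_Main "HOL-Combinatorics.Permutations"
begin

text \<open>Index set I = {1..N}; coordinates {1..d}. The i-th map is
  f_i x = diag(a_i) x + b_i, with a i c = a_i^(c), b i c = b_i^(c).
  Points of R^d are functions nat => real, vanishing outside {1..d}.\<close>

definition lam :: "(nat \<Rightarrow> nat \<Rightarrow> real) \<Rightarrow> nat \<Rightarrow> nat \<Rightarrow> real" where
  "lam a i c = \<bar>a i c\<bar>"

definition ifs_map :: "nat \<Rightarrow> (nat \<Rightarrow> nat \<Rightarrow> real) \<Rightarrow> (nat \<Rightarrow> nat \<Rightarrow> real) \<Rightarrow> nat
    \<Rightarrow> (nat \<Rightarrow> real) \<Rightarrow> (nat \<Rightarrow> real)" where
  "ifs_map d a b i x = (\<lambda>c. if c \<in> {1..d} then a i c * x c + b i c else 0)"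

definition unit_cube :: "nat \<Rightarrow> (nat \<Rightarrow> real) set" where
  "unit_cube d = {x. \<forall>c. (c \<in> {1..d} \<longrightarrow> 0 \<le> x c \<and> x c \<le> 1) \<and> (c \<notin> {1..d} \<longrightarrow> x c = 0)}"

definition coord_proj :: "(nat \<Rightarrow> nat) \<Rightarrow> nat \<Rightarrow> (nat \<Rightarrow> real) \<Rightarrow> (nat \<Rightarrow> real)" where
  "coord_proj \<sigma> n x = (\<lambda>c. if c \<in> \<sigma> ` {1..n} then x c else 0)"

definition overlap_exactly :: "nat \<Rightarrow> (nat \<Rightarrow> nat \<Rightarrow> real) \<Rightarrow> (nat \<Rightarrow> nat \<Rightarrow> real)
    \<Rightarrow> (nat \<Rightarrow> nat) \<Rightarrow> nat \<Rightarrow> nat \<Rightarrow> nat \<Rightarrow> bool" where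
  "overlap_exactly d a b \<sigma> n i j \<longleftrightarrow>
     (\<forall>x\<in>unit_cube d. coord_proj \<sigma> n (ifs_map d a b i x) = coord_proj \<sigma> n (ifs_map d a b j x))"

definition Iset :: "nat \<Rightarrow> nat \<Rightarrow> (nat \<Rightarrow> nat \<Rightarrow> real) \<Rightarrow> (nat \<Rightarrow> nat \<Rightarrow> real)
    \<Rightarrow> (nat \<Rightarrow> nat) \<Rightarrow> nat \<Rightarrow> nat set" where
  "Iset d N a b \<sigma> n = {i \<in> {1..N}. \<forall>j\<in>{1..N}. overlap_exactly d a b \<sigma> n j i \<longrightarrow> i \<le> j}"

definition Ldelta :: "(nat \<Rightarrow> nat \<Rightarrow> real) \<Rightarrow> (nat \<Rightarrow> nat) \<Rightarrow> real \<Rightarrow> nat \<Rightarrow> nat" where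
  "Ldelta a ii \<delta> c = (LEAST L. (\<Prod>l=1..L. lam a (ii l) c) \<le> \<delta>)"

definition class_A :: "nat \<Rightarrow> nat \<Rightarrow> (nat \<Rightarrow> nat \<Rightarrow> real) \<Rightarrow> (nat \<Rightarrow> nat) set" where
  "class_A d N a = {\<sigma>. \<sigma> permutes {1..d} \<and>
     (\<exists>ii \<delta>. (\<forall>l\<ge>1. ii l \<in> {1..N}) \<and> 0 < \<delta> \<and>
        (\<forall>n\<in>{2..d}. Ldelta a ii \<delta> (\<sigma> n) \<le> Ldelta a ii \<delta> (\<sigma> (n - 1)) \<and>
           (Ldelta a ii \<delta> (\<sigma> n) = Ldelta a ii \<delta> (\<sigma> (n - 1)) \<longrightarrow> \<sigma> (n - 1) < \<sigma> n)))}"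

definition prob_vec :: "nat set \<Rightarrow> (nat \<Rightarrow> real) \<Rightarrow> bool" where
  "prob_vec A p \<longleftrightarrow> (\<forall>i\<in>A. 0 \<le> p i) \<and> (\<Sum>i\<in>A. p i) = 1"

text \<open>P n stands for the paper's p_{sigma_n}, a probability vector on I_n^sigma.\<close>
definition prob_family :: "nat \<Rightarrow> nat \<Rightarrow> (nat \<Rightarrow> nat \<Rightarrow> real) \<Rightarrow> (nat \<Rightarrow> nat \<Rightarrow> real)
    \<Rightarrow> (nat \<Rightarrow> nat) \<Rightarrow> (nat \<Rightarrow> nat \<Rightarrow> real) \<Rightarrow> bool" where
  "prob_family d N a b \<sigma> P \<longleftrightarrow> (\<forall>n\<in>{1..d}. prob_vec (Iset d N a b \<sigma> n) (P n))"

definition chi :: "nat \<Rightarrow> nat \<Rightarrow> (nat \<Rightarrow> nat \<Rightarrow> real) \<Rightarrow> (nat \<Rightarrow> nat \<Rightarrow> real)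
    \<Rightarrow> (nat \<Rightarrow> nat) \<Rightarrow> nat \<Rightarrow> nat \<Rightarrow> (nat \<Rightarrow> real) \<Rightarrow> real" where
  "chi d N a b \<sigma> n m p = - (\<Sum>i\<in>Iset d N a b \<sigma> m. p i * ln (lam a i (\<sigma> n)))"

function Ccoef :: "nat \<Rightarrow> nat \<Rightarrow> (nat \<Rightarrow> nat \<Rightarrow> real) \<Rightarrow> (nat \<Rightarrow> nat \<Rightarrow> real)
    \<Rightarrow> (nat \<Rightarrow> nat) \<Rightarrow> (nat \<Rightarrow> nat \<Rightarrow> real) \<Rightarrow> nat \<Rightarrow> real" where
  "Ccoef d N a b \<sigma> P k =
     (if d \<le> k then 1 / chi d N a b \<sigma> d d (P d)
      else (1 - (\<Sum>m\<in>{k+1..d}. Ccoef d N a b \<sigma> P m * chi d N a b \<sigma> k m (P m)))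
           / chi d N a b \<sigma> k k (P k))"
  by pat_completeness auto
termination
  by (relation "measure (\<lambda>(d, N, a, b, \<sigma>, P, k). d - k)") auto

definition entropy :: "nat set \<Rightarrow> (nat \<Rightarrow> real) \<Rightarrow> real" where
  "entropy A p = - (\<Sum>i\<in>A. if p i = 0 then 0 else p i * ln (p i))"

definition integ :: "nat set \<Rightarrow> (nat \<Rightarrow> real) \<Rightarrow> (nat \<Rightarrow> real) \<Rightarrow> real" where
  "integ A f p = (\<Sum>i\<in>A. p i * f i)"

definition t_sigma :: "nat \<Rightarrow> nat \<Rightarrow> (nat \<Rightarrow> nat \<Rightarrow> real) \<Rightarrow> (nat \<Rightarrow> nat \<Rightarrow> real)
    \<Rightarrow> (nat \<Rightarrow> nat) \<Rightarrow> (nat \<Rightarrow> nat \<Rightarrow> real) \<Rightarrow> (nat \<Rightarrow> nat \<Rightarrow> real) \<Rightarrow> real" where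
  "t_sigma d N a b \<sigma> \<phi> P = (\<Sum>n=1..d. Ccoef d N a b \<sigma> P n *
      (entropy (Iset d N a b \<sigma> n) (P n) + integ (Iset d N a b \<sigma> n) (\<phi> n) (P n)))"

function Tpar :: "nat \<Rightarrow> nat \<Rightarrow> (nat \<Rightarrow> nat \<Rightarrow> real) \<Rightarrow> (nat \<Rightarrow> nat \<Rightarrow> real)
    \<Rightarrow> (nat \<Rightarrow> nat) \<Rightarrow> (nat \<Rightarrow> nat \<Rightarrow> real) \<Rightarrow> nat \<Rightarrow> real" where
  "Tpar d N a b \<sigma> \<phi> n =
     (if n = 0 then 0
      else THE t. (\<Sum>i\<in>Iset d N a b \<sigma> n. exp (\<phi> n i) *
             (\<Prod>l=1..n-1. lam a i (\<sigma> l) powr (Tpar d N a b \<sigma> \<phi> l - Tpar d N a b \<sigma> \<phi> (l - 1)))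
             * lam a i (\<sigma> n) powr (t - Tpar d N a b \<sigma> \<phi> (n - 1))) = 1)"
  by pat_completeness auto
termination
  by (relation "measure (\<lambda>(d, N, a, b, \<sigma>, \<phi>, n). n)") auto

definition pstar :: "nat \<Rightarrow> nat \<Rightarrow> (nat \<Rightarrow> nat \<Rightarrow> real) \<Rightarrow> (nat \<Rightarrow> nat \<Rightarrow> real)
    \<Rightarrow> (nat \<Rightarrow> nat) \<Rightarrow> (nat \<Rightarrow> nat \<Rightarrow> real) \<Rightarrow> nat \<Rightarrow> nat \<Rightarrow> real" where
  "pstar d N a b \<sigma> \<phi> n i = exp (\<phi> n i) *
     (\<Prod>l=1..n. lam a i (\<sigma> l) powr (Tpar d N a b \<sigma> \<phi> l - Tpar d N a b \<sigma> \<phi> (l - 1)))"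

end

theory Submission
  imports Defs
begin

text \<open>For k \<le> n the vector p*_k is a Gibbs measure,
  ln p*_k(i) = \<phi>_k(i) + \<Sum>_{l\<le>k} (T_l - T_{l-1}) ln \<lambda>_i^(\<sigma>_l),
  so H(p*_k) + \<integral>\<phi>_k dp*_k = \<Sum>_{l\<le>k} \<chi>_l(p*_k) (T_l - T_{l-1}).
  Weighting with C_k and exchanging the order of summation, the recursion defining the C_k says
  precisely that \<Sum>_{k\<ge>l} C_k \<chi>_l(p_k) = 1, so the first n levels telescope to T_n. The
  coefficients C_k with k > n depend only on p_m for m \<ge> k, which are left unchanged.\<close>

declare Ccoef.simps[simp del] Tpar.simps[simp del]

lemma powr_le_exp_neg_mult:
  fixes l s A :: real
  assumes "0 < l" "A \<le> - ln l" "0 \<le> s"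
  shows "l powr s \<le> exp (- (s * A))"
proof -
  have "s * A \<le> s * - ln l" using assms by (intro mult_left_mono)
  then show ?thesis using assms by (simp add: powr_def)
qed

lemma ex1_sum_powr_eq_1:
  fixes I :: "'i set" and c l :: "'i \<Rightarrow> real" and T\<^sub>0 :: real
  assumes fin: "finite I" and ne: "I \<noteq> {}"
    and cpos: "\<forall>i\<in>I. 0 < c i" and lbounds: "\<forall>i\<in>I. 0 < l i \<and> l i < 1"
  shows "\<exists>!t. (\<Sum>i\<in>I. c i * l i powr (t - T\<^sub>0)) = 1"
proof -
  define F where "F t = (\<Sum>i\<in>I. c i * l i powr (t - T\<^sub>0))" for t
  define A where "A = Min ((\<lambda>i. - ln (l i)) ` I)"
  define S where "S = (\<Sum>i\<in>I. c i)"
  \<comment> \<open>F decreases at exponential rate at least A, so F (T0 + u) \<le> 1 \<le> F (T0 - u).\<close>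
  define u where "u = \<bar>ln S\<bar> / A"
  have "0 < A" unfolding A_def using fin ne lbounds by (subst Min_gr_iff) auto
  then have uA: "u * A = \<bar>ln S\<bar>" and "0 \<le> u" unfolding u_def by auto
  have A_le: "A \<le> - ln (l i)" if "i \<in> I" for i unfolding A_def using fin that by simp
  have "0 < S" unfolding S_def using fin ne cpos by (simp add: sum_pos)
  have decreasing: "F t' < F t" if "t < t'" for t t'
    unfolding F_def using ne fin
    by (intro sum_strict_mono) (use cpos lbounds that powr_less_mono' in auto)
  have "F (T\<^sub>0 + u) \<le> S * exp (- (u * A))"
    unfolding F_def S_def sum_distrib_right
    using cpos lbounds A_le \<open>0 \<le> u\<close> by (auto intro!: sum_mono mult_left_mono powr_le_exp_neg_mult)
  also have "\<dots> = exp (ln S - \<bar>ln S\<bar>)" using \<open>0 < S\<close> uA by (simp add: exp_diff exp_minus divide_inverse)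
  also have "\<dots> \<le> 1" by simp
  finally have upper: "F (T\<^sub>0 + u) \<le> 1" .
  have "1 \<le> exp (ln S + \<bar>ln S\<bar>)" by simp
  also have "\<dots> = S * exp (u * A)" using \<open>0 < S\<close> uA by (simp add: exp_add)
  also have "\<dots> \<le> F (T\<^sub>0 - u)"
    unfolding F_def S_def sum_distrib_right
  proof (intro sum_mono mult_left_mono)
    fix i assume i: "i \<in> I"
    have "0 < l i" using lbounds i by simp
    have "l i powr u \<le> exp (- (u * A))"
      using lbounds A_le i \<open>0 \<le> u\<close> by (intro powr_le_exp_neg_mult) auto
    then show "exp (u * A) \<le> l i powr (T\<^sub>0 - u - T\<^sub>0)"
      using \<open>0 < l i\<close> by (simp add: powr_minus exp_minus field_simps)
  qed (use cpos in auto)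
  finally have lower: "1 \<le> F (T\<^sub>0 - u)" .
  have "continuous_on UNIV F" unfolding F_def using lbounds by (intro continuous_intros) auto
  then obtain t where "F t = 1"
    using IVT2'[of F "T\<^sub>0 + u" 1 "T\<^sub>0 - u"] upper lower \<open>0 \<le> u\<close> continuous_on_subset by fastforce
  moreover have "t = t'" if "F t = 1" "F t' = 1" for t t'
    using decreasing[of t t'] decreasing[of t' t] that by (cases t t' rule: linorder_cases) auto
  ultimately show ?thesis unfolding F_def by blast
qed

lemma sum_triangle_swap:
  fixes f :: "nat \<Rightarrow> nat \<Rightarrow> 'a::comm_monoid_add"
  shows "(\<Sum>k=1..n. \<Sum>l=1..k. f k l) = (\<Sum>l=1..n. \<Sum>k=l..n. f k l)"
proof (induction n)
  case (Suc n)
  have "(\<Sum>l=1..Suc n. \<Sum>k=l..Suc n. f k l) = (\<Sum>l=1..n. (\<Sum>k=l..n. f k l) + f (Suc n) l) + f (Suc n) (Suc n)"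
    by (simp add: add.commute)
  then show ?case using Suc by (simp add: sum.distrib add_ac)
qed simp

lemma sum_split_at:
  fixes g :: "nat \<Rightarrow> 'a::comm_monoid_add"
  assumes "m \<le> n + 1" "n \<le> d"
  shows "(\<Sum>k=m..d. g k) = (\<Sum>k=m..n. g k) + (\<Sum>k=n+1..d. g k)"
  using sum.ub_add_nat[OF assms(1), of g "d - n"] assms(2) by simp

lemma sum_triangular_weights:
  fixes C E D :: "nat \<Rightarrow> real" and \<chi> :: "nat \<Rightarrow> nat \<Rightarrow> real"
  assumes "n \<le> d"
    and weights: "\<And>l. l \<in> {1..n} \<Longrightarrow> (\<Sum>k=l..d. C k * \<chi> l k) = 1"
    and triangular: "\<And>k. k \<in> {1..n} \<Longrightarrow> E k = (\<Sum>l=1..k. \<chi> l k * D l)"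
  shows "(\<Sum>k=1..d. C k * E k) =
    (\<Sum>l=1..n. D l) + (\<Sum>k=n+1..d. C k * (E k - (\<Sum>l=1..n. \<chi> l k * D l)))"
proof -
  let ?tail = "\<lambda>l. \<Sum>k=n+1..d. C k * \<chi> l k * D l"
  have "(\<Sum>k=1..n. C k * E k) = (\<Sum>k=1..n. \<Sum>l=1..k. C k * \<chi> l k * D l)"
    by (simp add: triangular sum_distrib_left mult.assoc)
  also have "\<dots> = (\<Sum>l=1..n. \<Sum>k=l..n. C k * \<chi> l k * D l)"
    by (rule sum_triangle_swap)
  also have "\<dots> = (\<Sum>l=1..n. D l - ?tail l)"
  proof (intro sum.cong refl)
    fix l assume l: "l \<in> {1..n}"
    have "(\<Sum>k=l..n. C k * \<chi> l k * D l) + ?tail l = (\<Sum>k=l..d. C k * \<chi> l k) * D l"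
      using sum_split_at[of l n d "\<lambda>k. C k * \<chi> l k * D l"] l \<open>n \<le> d\<close>
      by (simp add: sum_distrib_right)
    then show "(\<Sum>k=l..n. C k * \<chi> l k * D l) = D l - ?tail l"
      using weights[OF l] by simp
  qed
  also have "(\<Sum>l=1..n. ?tail l) = (\<Sum>k=n+1..d. C k * (\<Sum>l=1..n. \<chi> l k * D l))"
    by (subst sum.swap) (simp add: sum_distrib_left mult.assoc)
  ultimately show ?thesis
    using sum_split_at[of 1 n d "\<lambda>k. C k * E k"] \<open>n \<le> d\<close>
    by (simp add: sum_subtractf right_diff_distrib)
qed

lemma neg_sum_mult_ln_pos:
  fixes p w :: "nat \<Rightarrow> real"
  assumes "finite A" "prob_vec A p" "\<forall>i\<in>A. 0 < w i \<and> w i < 1"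
  shows "0 < - (\<Sum>i\<in>A. p i * ln (w i))"
proof -
  have nonneg: "\<forall>i\<in>A. 0 \<le> p i" and "sum p A = 1"
    using assms(2) unfolding prob_vec_def by auto
  then obtain j where j: "j \<in> A" "p j \<noteq> 0" by (metis sum.neutral zero_neq_one)
  have ln_neg: "0 < - ln (w i)" if "i \<in> A" for i
    using assms(3) that by simp
  have "0 < (\<Sum>i\<in>A. p i * - ln (w i))"
  proof (rule sum_pos2[OF assms(1) j(1)])
    show "0 < p j * - ln (w j)" using nonneg j ln_neg[of j] by (intro mult_pos_pos) (auto simp: less_le)
    show "0 \<le> p i * - ln (w i)" if "i \<in> A" for i
      using nonneg ln_neg[of i] that by (intro mult_nonneg_nonneg) auto
  qed
  then show ?thesis by (simp add: sum_negf)
qed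

lemma entropy_add_integ_eq_gibbs:
  fixes p \<phi> :: "nat \<Rightarrow> real" and D :: "'l \<Rightarrow> real" and g :: "'l \<Rightarrow> nat \<Rightarrow> real"
  assumes "\<forall>i\<in>A. 0 < p i" and "\<forall>i\<in>A. ln (p i) = \<phi> i + (\<Sum>l\<in>L. D l * g l i)"
  shows "entropy A p + integ A \<phi> p = (\<Sum>l\<in>L. - (\<Sum>i\<in>A. p i * g l i) * D l)"
proof -
  have "entropy A p + integ A \<phi> p = (\<Sum>i\<in>A. p i * (\<phi> i - ln (p i)))"
    using assms(1) unfolding entropy_def integ_def
    by (simp add: sum_subtractf[symmetric] right_diff_distrib add.commute)
      (intro sum.cong refl, simp)
  also have "\<dots> = (\<Sum>i\<in>A. \<Sum>l\<in>L. - (p i * g l i) * D l)"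
    using assms(2) by (intro sum.cong refl) (simp add: sum_distrib_left sum_negf[symmetric] mult_ac)
  also have "\<dots> = (\<Sum>l\<in>L. - (\<Sum>i\<in>A. p i * g l i) * D l)"
    by (subst sum.swap) (simp add: sum_distrib_right sum_negf)
  finally show ?thesis .
qed

lemma Ccoef_cong:
  assumes "k \<le> d" "\<forall>m\<in>{k..d}. P m = Q m"
  shows "Ccoef d N a b \<sigma> P k = Ccoef d N a b \<sigma> Q k"
  using assms
proof (induction "d - k" arbitrary: k rule: less_induct)
  case less
  show ?case
  proof (cases "d \<le> k")
    case True
    then show ?thesis using less.prems by (subst (1 2) Ccoef.simps) simp
  next
    case False
    have "(\<Sum>m\<in>{k+1..d}. Ccoef d N a b \<sigma> P m * chi d N a b \<sigma> k m (P m)) =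
          (\<Sum>m\<in>{k+1..d}. Ccoef d N a b \<sigma> Q m * chi d N a b \<sigma> k m (Q m))"
      using less False by (intro sum.cong refl) auto
    then show ?thesis using False less.prems by (subst (1 2) Ccoef.simps) simp
  qed
qed

lemma Ccoef_chi_sum_eq_1:
  assumes "l \<le> d" "chi d N a b \<sigma> l l (Q l) \<noteq> 0"
  shows "(\<Sum>k=l..d. Ccoef d N a b \<sigma> Q k * chi d N a b \<sigma> l k (Q k)) = 1"
proof (cases "l = d")
  case True
  then show ?thesis using assms by (subst Ccoef.simps) simp
next
  case False
  then have "Ccoef d N a b \<sigma> Q l * chi d N a b \<sigma> l l (Q l) =
      1 - (\<Sum>m\<in>{l+1..d}. Ccoef d N a b \<sigma> Q m * chi d N a b \<sigma> l m (Q m))"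
    using assms by (subst Ccoef.simps) simp
  then show ?thesis using False assms(1) by (subst sum.atLeast_Suc_atMost) auto
qed

context
  fixes d N :: nat and a b \<phi> :: "nat \<Rightarrow> nat \<Rightarrow> real" and \<sigma> :: "nat \<Rightarrow> nat"
  assumes contraction: "\<forall>i\<in>{1..N}. \<forall>c\<in>{1..d}. 0 < lam a i c \<and> lam a i c < 1"
    and perm: "\<sigma> permutes {1..d}"
begin

lemma finite_Iset: "finite (Iset d N a b \<sigma> k)"
  unfolding Iset_def by simp

lemma lam_Iset_bounds:
  assumes "i \<in> Iset d N a b \<sigma> k" "l \<in> {1..d}"
  shows "0 < lam a i (\<sigma> l) \<and> lam a i (\<sigma> l) < 1"
  using contraction assms permutes_in_image[OF perm, of l] unfolding Iset_def by blast

lemma lam_powr_pos: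
  assumes "i \<in> Iset d N a b \<sigma> k" "l \<in> {1..d}"
  shows "0 < lam a i (\<sigma> l) powr x"
  using lam_Iset_bounds[OF assms] by simp

lemma pstar_pos:
  assumes "k \<le> d" "i \<in> Iset d N a b \<sigma> k"
  shows "0 < pstar d N a b \<sigma> \<phi> k i"
  unfolding pstar_def using assms by (intro mult_pos_pos exp_gt_zero prod_pos lam_powr_pos) auto

lemma prob_vec_pstar:
  assumes k: "k \<in> {1..d}" and ne: "Iset d N a b \<sigma> k \<noteq> {}"
  shows "prob_vec (Iset d N a b \<sigma> k) (pstar d N a b \<sigma> \<phi> k)"
proof -
  let ?I = "Iset d N a b \<sigma> k" and ?T = "Tpar d N a b \<sigma> \<phi>"
  define c where "c i = exp (\<phi> k i) * (\<Prod>l=1..k-1. lam a i (\<sigma> l) powr (?T l - ?T (l - 1)))" for i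
  have pstar_c: "pstar d N a b \<sigma> \<phi> k i = c i * lam a i (\<sigma> k) powr (?T k - ?T (k - 1))" for i
    using k unfolding pstar_def c_def by (cases k) (auto simp: prod.cl_ivl_Suc)
  have "\<forall>i\<in>?I. 0 < c i"
    unfolding c_def using k by (auto intro!: mult_pos_pos prod_pos lam_powr_pos)
  moreover have "\<forall>i\<in>?I. 0 < lam a i (\<sigma> k) \<and> lam a i (\<sigma> k) < 1"
    using k lam_Iset_bounds by blast
  ultimately have ex1: "\<exists>!t. (\<Sum>i\<in>?I. c i * lam a i (\<sigma> k) powr (t - ?T (k - 1))) = 1"
    using finite_Iset ne by (intro ex1_sum_powr_eq_1) auto
  have T_k: "?T k = (THE t. (\<Sum>i\<in>?I. c i * lam a i (\<sigma> k) powr (t - ?T (k - 1))) = 1)"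
    using k by (subst Tpar.simps) (simp add: c_def)
  have "(\<Sum>i\<in>?I. c i * lam a i (\<sigma> k) powr (?T k - ?T (k - 1))) = 1"
    using theI'[OF ex1] unfolding T_k[symmetric] .
  then have "(\<Sum>i\<in>?I. pstar d N a b \<sigma> \<phi> k i) = 1"
    unfolding pstar_c .
  then show ?thesis
    using k pstar_pos unfolding prob_vec_def by (auto intro: less_imp_le)
qed

lemma ln_pstar:
  assumes "k \<le> d" "i \<in> Iset d N a b \<sigma> k"
  shows "ln (pstar d N a b \<sigma> \<phi> k i) = \<phi> k i +
     (\<Sum>l=1..k. (Tpar d N a b \<sigma> \<phi> l - Tpar d N a b \<sigma> \<phi> (l - 1)) * ln (lam a i (\<sigma> l)))"
proof -
  let ?D = "\<lambda>l. Tpar d N a b \<sigma> \<phi> l - Tpar d N a b \<sigma> \<phi> (l - 1)"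
  have lam_pos: "0 < lam a i (\<sigma> l)" if "l \<in> {1..k}" for l
    using assms that lam_Iset_bounds by auto
  then have "0 < (\<Prod>l=1..k. lam a i (\<sigma> l) powr ?D l)"
    by (intro prod_pos) (simp add: dual_order.strict_implies_not_eq)
  then have "ln (pstar d N a b \<sigma> \<phi> k i) = \<phi> k i + ln (\<Prod>l=1..k. lam a i (\<sigma> l) powr ?D l)"
    unfolding pstar_def by (simp add: ln_mult_pos)
  also have "ln (\<Prod>l=1..k. lam a i (\<sigma> l) powr ?D l) = (\<Sum>l=1..k. ?D l * ln (lam a i (\<sigma> l)))"
    using lam_pos by (subst ln_prod) (auto simp: dual_order.strict_implies_not_eq)
  finally show ?thesis .
qed

lemma prob_family_pstar_prefix:
  assumes "prob_family d N a b \<sigma> P"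
  shows "prob_family d N a b \<sigma> (\<lambda>k. if k \<le> n then pstar d N a b \<sigma> \<phi> k else P k)"
proof -
  have "Iset d N a b \<sigma> k \<noteq> {}" if "k \<in> {1..d}" for k
    using assms that unfolding prob_family_def prob_vec_def by fastforce
  then show ?thesis
    using assms prob_vec_pstar unfolding prob_family_def by simp
qed

lemma chi_diag_pos:
  assumes "l \<in> {1..d}" "prob_vec (Iset d N a b \<sigma> l) p"
  shows "0 < chi d N a b \<sigma> l l p"
  unfolding chi_def using assms finite_Iset lam_Iset_bounds by (intro neg_sum_mult_ln_pos) auto

lemma t_sigma_pstar_prefix:
  assumes "n \<le> d" and Q: "prob_family d N a b \<sigma> Q"
    and prefix: "\<forall>k\<in>{1..n}. Q k = pstar d N a b \<sigma> \<phi> k"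
  shows "t_sigma d N a b \<sigma> \<phi> Q = Tpar d N a b \<sigma> \<phi> n +
    (\<Sum>k=n+1..d. Ccoef d N a b \<sigma> Q k *
       (entropy (Iset d N a b \<sigma> k) (Q k) + integ (Iset d N a b \<sigma> k) (\<phi> k) (Q k)
        - (\<Sum>l=1..n. chi d N a b \<sigma> l k (Q k) * (Tpar d N a b \<sigma> \<phi> l - Tpar d N a b \<sigma> \<phi> (l - 1)))))"
proof -
  let ?T = "Tpar d N a b \<sigma> \<phi>"
  have "(\<Sum>k=1..d. Ccoef d N a b \<sigma> Q k *
      (entropy (Iset d N a b \<sigma> k) (Q k) + integ (Iset d N a b \<sigma> k) (\<phi> k) (Q k))) =
    (\<Sum>l=1..n. ?T l - ?T (l - 1)) +
    (\<Sum>k=n+1..d. Ccoef d N a b \<sigma> Q k *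
       (entropy (Iset d N a b \<sigma> k) (Q k) + integ (Iset d N a b \<sigma> k) (\<phi> k) (Q k)
        - (\<Sum>l=1..n. chi d N a b \<sigma> l k (Q k) * (?T l - ?T (l - 1)))))"
  proof (rule sum_triangular_weights[OF \<open>n \<le> d\<close>])
    fix l assume "l \<in> {1..n}"
    then show "(\<Sum>k=l..d. Ccoef d N a b \<sigma> Q k * chi d N a b \<sigma> l k (Q k)) = 1"
      using Q \<open>n \<le> d\<close> chi_diag_pos unfolding prob_family_def
      by (intro Ccoef_chi_sum_eq_1) force+
  next
    fix k assume k: "k \<in> {1..n}"
    then have "\<forall>i\<in>Iset d N a b \<sigma> k. 0 < Q k i \<and>
        ln (Q k i) = \<phi> k i + (\<Sum>l=1..k. (?T l - ?T (l - 1)) * ln (lam a i (\<sigma> l)))"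
      using prefix \<open>n \<le> d\<close> pstar_pos ln_pstar by auto
    then show "entropy (Iset d N a b \<sigma> k) (Q k) + integ (Iset d N a b \<sigma> k) (\<phi> k) (Q k) =
        (\<Sum>l=1..k. chi d N a b \<sigma> l k (Q k) * (?T l - ?T (l - 1)))"
      unfolding chi_def by (subst entropy_add_integ_eq_gibbs) auto
  qed
  moreover have "(\<Sum>l=1..n. ?T l - ?T (l - 1)) = ?T n"
    by (induction n) (auto simp: Tpar.simps[of _ _ _ _ _ _ 0])
  ultimately show ?thesis unfolding t_sigma_def by simp
qed

lemma t_sigma_pstar_replace_prefix:
  assumes "n \<le> d" and P: "prob_family d N a b \<sigma> P"
  shows "t_sigma d N a b \<sigma> \<phi> (\<lambda>k. if k \<le> n then pstar d N a b \<sigma> \<phi> k else P k) =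
    Tpar d N a b \<sigma> \<phi> n +
    (\<Sum>k=n+1..d. Ccoef d N a b \<sigma> P k *
       (entropy (Iset d N a b \<sigma> k) (P k) + integ (Iset d N a b \<sigma> k) (\<phi> k) (P k)
        - (\<Sum>l=1..n. chi d N a b \<sigma> l k (P k) * (Tpar d N a b \<sigma> \<phi> l - Tpar d N a b \<sigma> \<phi> (l - 1)))))"
proof -
  let ?Q = "\<lambda>k. if k \<le> n then pstar d N a b \<sigma> \<phi> k else P k"
  let ?E = "\<lambda>k p. entropy (Iset d N a b \<sigma> k) p + integ (Iset d N a b \<sigma> k) (\<phi> k) p
     - (\<Sum>l=1..n. chi d N a b \<sigma> l k p * (Tpar d N a b \<sigma> \<phi> l - Tpar d N a b \<sigma> \<phi> (l - 1)))"
  have "t_sigma d N a b \<sigma> \<phi> ?Q =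
      Tpar d N a b \<sigma> \<phi> n + (\<Sum>k=n+1..d. Ccoef d N a b \<sigma> ?Q k * ?E k (?Q k))"
    using assms by (intro t_sigma_pstar_prefix prob_family_pstar_prefix) auto
  also have "(\<Sum>k=n+1..d. Ccoef d N a b \<sigma> ?Q k * ?E k (?Q k)) =
      (\<Sum>k=n+1..d. Ccoef d N a b \<sigma> P k * ?E k (P k))"
  proof (intro sum.cong refl)
    fix k assume "k \<in> {n+1..d}"
    moreover from this have "Ccoef d N a b \<sigma> ?Q k = Ccoef d N a b \<sigma> P k"
      by (intro Ccoef_cong) auto
    ultimately show "Ccoef d N a b \<sigma> ?Q k * ?E k (?Q k) = Ccoef d N a b \<sigma> P k * ?E k (P k)"
      by simp
  qed
  finally show ?thesis .
qed

lemma t_sigma_pstar: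
  assumes "prob_family d N a b \<sigma> P"
  shows "t_sigma d N a b \<sigma> \<phi> (pstar d N a b \<sigma> \<phi>) = Tpar d N a b \<sigma> \<phi> d"
proof -
  have "prob_family d N a b \<sigma> (pstar d N a b \<sigma> \<phi>)"
    using prob_family_pstar_prefix[OF assms, of d] unfolding prob_family_def by simp
  then show ?thesis
    using t_sigma_pstar_prefix[of d] by simp
qed

end

theorem lemma5p2:
  fixes d N :: nat and a b \<phi> P :: "nat \<Rightarrow> nat \<Rightarrow> real" and \<sigma> :: "nat \<Rightarrow> nat"
  assumes "1 \<le> d"
    and "\<forall>i\<in>{1..N}. \<forall>c\<in>{1..d}. 0 < lam a i c \<and> lam a i c < 1"
    and "\<forall>i\<in>{1..N}. \<forall>j\<in>{1..N}. i \<noteq> j \<longrightarrow>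
           (\<exists>x\<in>unit_cube d. ifs_map d a b i x \<noteq> ifs_map d a b j x)"
    and "\<sigma> \<in> class_A d N a"
    and "prob_family d N a b \<sigma> P"
  shows "(\<forall>n\<in>{1..d-1}.
           t_sigma d N a b \<sigma> \<phi> (\<lambda>k. if k \<le> n then pstar d N a b \<sigma> \<phi> k else P k)
           = Tpar d N a b \<sigma> \<phi> n +
             (\<Sum>k=n+1..d. Ccoef d N a b \<sigma> P k *
                (entropy (Iset d N a b \<sigma> k) (P k) + integ (Iset d N a b \<sigma> k) (\<phi> k) (P k)
                 - (\<Sum>l=1..n. chi d N a b \<sigma> l k (P k) *
                      (Tpar d N a b \<sigma> \<phi> l - Tpar d N a b \<sigma> \<phi> (l - 1))))))
         \<and> t_sigma d N a b \<sigma> \<phi> (pstar d N a b \<sigma> \<phi>) = Tpar d N a b \<sigma> \<phi> d"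
proof -
  have "\<sigma> permutes {1..d}" using assms(4) unfolding class_A_def by blast
  then show ?thesis
    using t_sigma_pstar_replace_prefix[OF assms(2) _ _ assms(5)] t_sigma_pstar[OF assms(2) _ assms(5)]
    by auto
qed

end
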